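(* Let $d,p\ge1$, let $\eta:\mathbb R^d\to\mathbb R$ be measurable, let $P_1,\dots,P_d$ be probability distributions on $\mathbb R$, let $\Theta\subset\mathbb R^p$ be compact and $(C_\theta)_{\theta\in\Theta}$ a family of $d$-dimensional copulas; let $P_\theta$ be the distribution on $\mathbb R^d$ with marginals $P_1,\dots,P_d$ and copula $C_\theta$, and $G_\theta$ the CDF of $\eta(\mathbf X)$ for $\mathbf X\sim P_\theta$. For a CDF $G$ let $G^{-1}(\alpha)=\inf\{y:G(y)\ge\alpha\}$. Fix $\alpha\in(0,1)$ and assume: (A2) for every $\theta\in\Theta$, $G_\theta$ is continuous; (A3) for every $\theta\in\Theta$, $G_\theta$ is strictly increasing, and there is a function $\underline{\epsilon}_\Theta:(0,\infty)\to(0,\infty)$ with $\min\big(G_\theta(y_\theta+\delta)-G_\theta(y_\theta),\,G_\theta(y_\theta)-G_\theta(y_\theta-\delta)\big)\ge\underline{\epsilon}_\Theta(\delta)$ for all $\theta\in\Theta$, $\delta>0$, where $y_\theta=G_\theta^{-1}(\alpha)$. Let $(\Theta_{K_n})_{n\ge1}$ be finite subsets of $\Theta$ of cardinality $K_n\le K n^\beta$ for some constants $K,\beta>0$. For each $n$ and $\theta\in\Theta_{K_n}$ let $\mathbf X_1,\dots,\mathbf X_n$ be i.i.d. with law $P_\theta$ (all on a common probability space), $Y_i=\eta(\mathbf X_i)$, $\widehat G_\theta(y)=\frac1n\sum_{i=1}^n\mathbf 1_{Y_i\le y}$ and $\widehat G_\theta^{-1}(\alpha)=\inf\{y:\widehat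 G_\theta(y)\ge\alpha\}$. Then for every $\epsilon>0$, $$\mathbb P\Big(\sup_{\theta\in\Theta_{K_n}}\big|\widehat G_\theta^{-1}(\alpha)-G_\theta^{-1}(\alpha)\big|>\epsilon\Big)\xrightarrow[n\to\infty]{}0.$$
   Context: A $d$-dimensional copula is a CDF on $[0,1]^d$ with uniform marginals; $P_\theta$ has joint CDF $C_\theta(F_1(x_1),\dots,F_d(x_d))$ with $F_j$ the CDF of $P_j$. *)

theory Defs
  imports "HOL-Probability.Probability"
begin

definition unit_cube :: "(real^'d) set" where
  "unit_cube = {u. \<forall>i. 0 \<le> u$i \<and> u$i \<le> 1}"

definition is_copula :: "(real^'d \<Rightarrow> real) \<Rightarrow> bool" where
  "is_copula C \<longleftrightarrow>
     (\<exists>\<mu>. prob_space \<mu> \<and> sets \<mu> = sets (borel :: (real^'d) measure) \<and>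
          measure \<mu> unit_cube = 1 \<and>
          (\<forall>i t. 0 \<le> t \<and> t \<le> 1 \<longrightarrow> measure \<mu> {x. x$i \<le> t} = t) \<and>
          (\<forall>u\<in>unit_cube. C u = measure \<mu> {x. \<forall>i. x$i \<le> u$i}))"

definition cdf_of :: "real measure \<Rightarrow> real \<Rightarrow> real" where
  "cdf_of P t = measure P {..t}"

definition gen_inv :: "(real \<Rightarrow> real) \<Rightarrow> real \<Rightarrow> real" where
  "gen_inv G \<alpha> = Inf {y. G y \<ge> \<alpha>}"

end

theory Submission
  imports Defs "HOL-Real_Asymp.Real_Asymp"
begin

text \<open>For each grid point \<open>\<theta>\<close>, if the empirical quantile misses \<open>y\<^sub>\<theta> = G\<^sub>\<theta>\<^sup>-\<^sup>1(\<alpha>)\<close> by more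
  than \<open>\<epsilon>\<close>, then the empirical CDF is below \<open>\<alpha>\<close> at \<open>y\<^sub>\<theta> + \<epsilon>\<close> or at least \<open>\<alpha>\<close> at \<open>y\<^sub>\<theta> - \<epsilon>\<close>.
  By continuity \<open>G\<^sub>\<theta>(y\<^sub>\<theta>) = \<alpha>\<close>, so (A3) makes either event a deviation of the empirical CDF
  from \<open>G\<^sub>\<theta>\<close> by at least \<open>c = \<epsilon>\<^sub>\<Theta>(\<epsilon>)\<close>, uniformly in \<open>\<theta>\<close>. Hoeffding's inequality bounds each
  deviation by \<open>exp(-2nc\<^sup>2)\<close>, and a union bound over the at most \<open>Kn\<^sup>\<beta>\<close> grid points leaves
  \<open>2Kn\<^sup>\<beta> exp(-2nc\<^sup>2) \<longrightarrow> 0\<close>.\<close>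

definition empirical_cdf :: "(nat \<Rightarrow> real) \<Rightarrow> nat \<Rightarrow> real \<Rightarrow> real" where
  "empirical_cdf ys n = (\<lambda>y. (\<Sum>i\<in>{1..n}. if ys i \<le> y then 1 else 0) / real n)"

lemma gen_inv_le:
  assumes "bdd_below {y. \<alpha> \<le> G y}" and "\<alpha> \<le> G y"
  shows "gen_inv G \<alpha> \<le> y"
  using assms unfolding gen_inv_def by (auto intro: cInf_lower)

lemma gen_inv_less_imp_le:
  assumes "mono G" and "{y. \<alpha> \<le> G y} \<noteq> {}" and "bdd_below {y. \<alpha> \<le> G y}"
    and "gen_inv G \<alpha> < y"
  shows "\<alpha> \<le> G y"
proof -
  obtain s where "\<alpha> \<le> G s" "s < y"
    using assms(2-4) cInf_less_iff[of "{y. \<alpha> \<le> G y}"] unfolding gen_inv_def by auto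
  then show ?thesis
    using \<open>mono G\<close> by (meson dual_order.trans less_imp_le monoD)
qed

lemma continuous_cdf_gen_inv:
  fixes G :: "real \<Rightarrow> real"
  assumes top: "(G \<longlongrightarrow> 1) at_top" and bot: "(G \<longlongrightarrow> 0) at_bot"
    and cont: "continuous_on UNIV G" and \<alpha>: "0 < \<alpha>" "\<alpha> < 1"
  shows "G (gen_inv G \<alpha>) = \<alpha>"
proof -
  define S where "S = {y. \<alpha> \<le> G y}"
  have "eventually (\<lambda>y. \<alpha> < G y) at_top"
    using top \<alpha> by (intro order_tendstoD) auto
  then obtain a where "\<alpha> < G a"
    by (metis eventually_at_top_linorder order_refl)
  then have nonempty: "S \<noteq> {}"
    unfolding S_def by (auto intro: less_imp_le)
  have "eventually (\<lambda>y. G y < \<alpha>) at_bot"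
    using bot \<alpha> by (intro order_tendstoD) auto
  then obtain b where b: "\<And>y. y \<le> b \<Longrightarrow> G y < \<alpha>"
    by (auto simp: eventually_at_bot_linorder)
  have bdd: "bdd_below S"
  proof (rule bdd_belowI)
    fix y assume "y \<in> S"
    then show "b \<le> y"
      using b[of y] unfolding S_def by force
  qed
  have "closed S"
    unfolding S_def using cont by (intro closed_Collect_le continuous_on_const) auto
  then have "gen_inv G \<alpha> \<in> S"
    using closed_contains_Inf[OF nonempty bdd] unfolding S_def gen_inv_def by simp
  then have ge: "\<alpha> \<le> G (gen_inv G \<alpha>)"
    unfolding S_def by simp
  have "G y \<le> \<alpha>" if "y < gen_inv G \<alpha>" for y
    using gen_inv_le[OF bdd[unfolded S_def], of y] that by linarith
  then have "eventually (\<lambda>y. G y \<le> \<alpha>) (at_left (gen_inv G \<alpha>))"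
    by (intro eventually_at_leftI[of "gen_inv G \<alpha> - 1"]) auto
  moreover have "(G \<longlongrightarrow> G (gen_inv G \<alpha>)) (at_left (gen_inv G \<alpha>))"
    using cont by (metis continuous_on_def UNIV_I tendsto_within_subset subset_UNIV)
  ultimately have "G (gen_inv G \<alpha>) \<le> \<alpha>"
    by (intro tendsto_upperbound) auto
  with ge show ?thesis
    by simp
qed

lemma cdf_distr_eq_measure_le:
  assumes "sets P = sets borel" and "\<eta> \<in> borel_measurable borel"
  shows "cdf (distr P borel \<eta>) y = measure P {z. \<eta> z \<le> y}"
proof -
  have "space P = UNIV"
    using assms(1) by (metis sets_eq_imp_space_eq space_borel)
  moreover have "\<eta> \<in> borel_measurable P"
    using assms measurable_cong_sets by blast
  ultimately show ?thesis
    unfolding cdf_def by (subst measure_distr) (auto simp: vimage_def)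
qed

lemma gen_inv_continuous_distribution:
  fixes \<eta> :: "'b::topological_space \<Rightarrow> real"
  assumes "prob_space P" and "sets P = sets borel" and "\<eta> \<in> borel_measurable borel"
    and "continuous_on UNIV (\<lambda>y. measure P {z. \<eta> z \<le> y})" and "0 < \<alpha>" "\<alpha> < 1"
  shows "measure P {z. \<eta> z \<le> gen_inv (\<lambda>y. measure P {z. \<eta> z \<le> y}) \<alpha>} = \<alpha>"
proof -
  have distr: "real_distribution (distr P borel \<eta>)"
    using assms(1-3) measurable_cong_sets[OF assms(2) refl]
    by (intro prob_space.real_distribution_distr) auto
  have "(\<lambda>y. measure P {z. \<eta> z \<le> y}) = cdf (distr P borel \<eta>)"
    using cdf_distr_eq_measure_le[OF assms(2,3)] by auto
  with assms(4-6) show ?thesis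
    using continuous_cdf_gen_inv[OF real_distribution.cdf_lim_at_top_prob[OF distr]
        finite_borel_measure.cdf_lim_at_bot[OF real_distribution.finite_borel_measure_M[OF distr]]]
    by metis
qed

lemma mono_empirical_cdf: "mono (empirical_cdf ys n)"
  unfolding empirical_cdf_def by (intro monoI divide_right_mono sum_mono) auto

lemma empirical_cdf_superlevel_set:
  assumes "n \<ge> 1" and "0 < \<alpha>" "\<alpha> \<le> 1"
  shows "{y. \<alpha> \<le> empirical_cdf ys n y} \<noteq> {}"
    and "bdd_below {y. \<alpha> \<le> empirical_cdf ys n y}"
proof -
  define B where "B = (\<Sum>i\<in>{1..n}. \<bar>ys i\<bar>)"
  have ys_B: "\<bar>ys i\<bar> \<le> B" if "i \<in> {1..n}" for i
    unfolding B_def by (rule member_le_sum) (use that in auto)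
  have "empirical_cdf ys n B = 1"
    unfolding empirical_cdf_def using ys_B assms(1) by (simp add: abs_le_iff)
  then show "{y. \<alpha> \<le> empirical_cdf ys n y} \<noteq> {}"
    using assms(3) by (metis empty_iff mem_Collect_eq)
  have "\<not> ys i \<le> y" if "i \<in> {1..n}" and "y < -B" for i y
    using ys_B[OF that(1)] that(2) by (simp add: abs_le_iff)
  then have vanish: "empirical_cdf ys n y = 0" if "y < -B" for y
    unfolding empirical_cdf_def using that by simp
  show "bdd_below {y. \<alpha> \<le> empirical_cdf ys n y}"
  proof (rule bdd_belowI)
    fix y assume "y \<in> {y. \<alpha> \<le> empirical_cdf ys n y}"
    then show "-B \<le> y"
      using vanish[of y] assms(2) by (cases "y < -B") auto
  qed
qed

lemma empirical_quantile_far: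
  assumes n: "n \<ge> 1" and \<alpha>: "0 < \<alpha>" "\<alpha> \<le> 1"
    and far: "\<epsilon> < \<bar>gen_inv (empirical_cdf ys n) \<alpha> - y\<^sub>0\<bar>"
  shows "empirical_cdf ys n (y\<^sub>0 + \<epsilon>) < \<alpha> \<or> \<alpha> \<le> empirical_cdf ys n (y\<^sub>0 - \<epsilon>)"
proof (cases "y\<^sub>0 + \<epsilon> < gen_inv (empirical_cdf ys n) \<alpha>")
  case True
  have "\<not> \<alpha> \<le> empirical_cdf ys n (y\<^sub>0 + \<epsilon>)"
  proof
    assume "\<alpha> \<le> empirical_cdf ys n (y\<^sub>0 + \<epsilon>)"
    then have "gen_inv (empirical_cdf ys n) \<alpha> \<le> y\<^sub>0 + \<epsilon>"
      by (rule gen_inv_le[OF empirical_cdf_superlevel_set(2)[OF n \<alpha>]])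
    with True show False
      by simp
  qed
  then show ?thesis
    by simp
next
  case False
  with far have "gen_inv (empirical_cdf ys n) \<alpha> < y\<^sub>0 - \<epsilon>"
    by linarith
  then show ?thesis
    using gen_inv_less_imp_le[OF mono_empirical_cdf empirical_cdf_superlevel_set[OF n \<alpha>]] by blast
qed

lemma (in prob_space) expectation_indicator_distr:
  assumes "X \<in> borel_measurable M" and "distr M borel X = Q" and "A \<in> sets borel"
  shows "expectation (\<lambda>\<omega>. indicator A (X \<omega>) :: real) = measure Q A"
proof -
  interpret Q: prob_space Q
    using assms(1,2) prob_space_distr by blast
  have "expectation (\<lambda>\<omega>. indicator A (X \<omega>) :: real) = integral\<^sup>L (distr M borel X) (indicator A)"
    by (rule integral_distr[symmetric]) (use assms(1,3) in auto)
  moreover have "space Q = UNIV"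
    using assms(2) by (metis space_distr space_borel)
  ultimately show ?thesis
    using assms(2,3) by simp
qed

lemma (in prob_space) empirical_cdf_hoeffding:
  fixes Xs :: "nat \<Rightarrow> 'a \<Rightarrow> 'b::topological_space" and \<eta> :: "'b \<Rightarrow> real"
  assumes n: "n \<ge> 1" and indep: "indep_vars (\<lambda>_. borel) Xs {1..n}"
    and distr: "\<And>i. i \<in> {1..n} \<Longrightarrow> distr M borel (Xs i) = Q"
    and \<eta>: "\<eta> \<in> borel_measurable borel" and c: "c \<ge> 0"
  shows lower_sets: "{\<omega>\<in>space M. empirical_cdf (\<lambda>i. \<eta> (Xs i \<omega>)) n t
          \<le> measure Q {z. \<eta> z \<le> t} - c} \<in> sets M"
    and upper_sets: "{\<omega>\<in>space M. measure Q {z. \<eta> z \<le> t} + c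
          \<le> empirical_cdf (\<lambda>i. \<eta> (Xs i \<omega>)) n t} \<in> sets M"
    and lower_tail: "measure M {\<omega>\<in>space M. empirical_cdf (\<lambda>i. \<eta> (Xs i \<omega>)) n t
          \<le> measure Q {z. \<eta> z \<le> t} - c} \<le> exp (-2 * real n * c\<^sup>2)"
    and upper_tail: "measure M {\<omega>\<in>space M. measure Q {z. \<eta> z \<le> t} + c
          \<le> empirical_cdf (\<lambda>i. \<eta> (Xs i \<omega>)) n t} \<le> exp (-2 * real n * c\<^sup>2)"
proof -
  define F where "F = measure Q {z. \<eta> z \<le> t}"
  define Z where "Z = (\<lambda>i \<omega>. indicator {z. \<eta> z \<le> t} (Xs i \<omega>) :: real)"
  have level_set: "{z. \<eta> z \<le> t} \<in> sets borel"
    using \<eta> by measurable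
  have Xs_meas: "Xs i \<in> borel_measurable M" if "i \<in> {1..n}" for i
    using indep that unfolding indep_vars_def by blast
  interpret Hoeffding_ineq M "{1..n}" Z "\<lambda>_. 0" "\<lambda>_. 1" "\<Sum>i\<in>{1..n}. expectation (Z i)"
  proof unfold_locales
    show "indep_vars (\<lambda>_. borel) Z {1..n}"
      unfolding Z_def by (rule indep_vars_compose2[OF indep]) (use level_set in auto)
  qed (auto simp: Z_def)
  have \<mu>: "(\<Sum>i\<in>{1..n}. expectation (Z i)) = real n * F"
    using expectation_indicator_distr[OF Xs_meas distr level_set] unfolding Z_def F_def by simp
  have sum_Z: "empirical_cdf (\<lambda>i. \<eta> (Xs i \<omega>)) n t = (\<Sum>i\<in>{1..n}. Z i \<omega>) / real n" for \<omega>
    unfolding empirical_cdf_def Z_def by (intro arg_cong2[where f = "(/)"] sum.cong) auto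
  have "(\<lambda>\<omega>. empirical_cdf (\<lambda>i. \<eta> (Xs i \<omega>)) n t) \<in> borel_measurable M"
    unfolding sum_Z Z_def using Xs_meas level_set by (intro borel_measurable_divide borel_measurable_sum) auto
  note [measurable] = this
  show "{\<omega>\<in>space M. empirical_cdf (\<lambda>i. \<eta> (Xs i \<omega>)) n t \<le> measure Q {z. \<eta> z \<le> t} - c} \<in> sets M"
    and "{\<omega>\<in>space M. measure Q {z. \<eta> z \<le> t} + c \<le> empirical_cdf (\<lambda>i. \<eta> (Xs i \<omega>)) n t} \<in> sets M"
    by measurable
  have n_pos: "real n > 0" and nc: "real n * c \<ge> 0"
    using n c by auto
  have spread: "(\<Sum>i\<in>{1..n}. ((\<lambda>_. 1::real) i - (\<lambda>_. 0) i)\<^sup>2) = real n"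
    by simp
  have exponent: "exp (-2 * (real n * c)\<^sup>2 / real n) = exp (-2 * real n * c\<^sup>2)"
    using n_pos by (simp add: power2_eq_square)
  have "s / real n \<le> F - c \<longleftrightarrow> s \<le> (\<Sum>i\<in>{1..n}. expectation (Z i)) - real n * c"
    and "F + c \<le> s / real n \<longleftrightarrow> (\<Sum>i\<in>{1..n}. expectation (Z i)) + real n * c \<le> s" for s
    unfolding pos_divide_le_eq[OF n_pos] pos_le_divide_eq[OF n_pos] \<mu> by (simp_all add: algebra_simps)
  then have lower_eq: "{\<omega>\<in>space M. empirical_cdf (\<lambda>i. \<eta> (Xs i \<omega>)) n t \<le> F - c}
      = {\<omega>\<in>space M. (\<Sum>i\<in>{1..n}. Z i \<omega>) \<le> (\<Sum>i\<in>{1..n}. expectation (Z i)) - real n * c}"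
    and upper_eq: "{\<omega>\<in>space M. F + c \<le> empirical_cdf (\<lambda>i. \<eta> (Xs i \<omega>)) n t}
      = {\<omega>\<in>space M. (\<Sum>i\<in>{1..n}. expectation (Z i)) + real n * c \<le> (\<Sum>i\<in>{1..n}. Z i \<omega>)}"
    unfolding sum_Z by simp_all
  show "measure M {\<omega>\<in>space M. empirical_cdf (\<lambda>i. \<eta> (Xs i \<omega>)) n t
          \<le> measure Q {z. \<eta> z \<le> t} - c} \<le> exp (-2 * real n * c\<^sup>2)"
    unfolding F_def[symmetric] lower_eq
    by (rule Hoeffding_ineq_le[OF nc, unfolded spread exponent, OF n_pos])
  show "measure M {\<omega>\<in>space M. measure Q {z. \<eta> z \<le> t} + c
          \<le> empirical_cdf (\<lambda>i. \<eta> (Xs i \<omega>)) n t} \<le> exp (-2 * real n * c\<^sup>2)"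
    unfolding F_def[symmetric] upper_eq
    by (rule Hoeffding_ineq_ge[OF nc, unfolded spread exponent, OF n_pos])
qed

lemma (in prob_space) empirical_quantile_deviation:
  fixes Xs :: "nat \<Rightarrow> 'a \<Rightarrow> 'b::topological_space" and \<eta> :: "'b \<Rightarrow> real"
  assumes n: "n \<ge> 1" and indep: "indep_vars (\<lambda>_. borel) Xs {1..n}"
    and distr: "\<And>i. i \<in> {1..n} \<Longrightarrow> distr M borel (Xs i) = Q"
    and \<eta>: "\<eta> \<in> borel_measurable borel" and \<alpha>: "0 < \<alpha>" "\<alpha> \<le> 1" and c: "c \<ge> 0"
    and above: "\<alpha> + c \<le> measure Q {z. \<eta> z \<le> y\<^sub>0 + \<epsilon>}"
    and below: "measure Q {z. \<eta> z \<le> y\<^sub>0 - \<epsilon>} \<le> \<alpha> - c"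
  shows "\<exists>A\<in>sets M. {\<omega>\<in>space M. \<epsilon> < \<bar>gen_inv (empirical_cdf (\<lambda>i. \<eta> (Xs i \<omega>)) n) \<alpha> - y\<^sub>0\<bar>} \<subseteq> A
           \<and> measure M A \<le> 2 * exp (-2 * real n * c\<^sup>2)"
proof -
  note hoeffding = empirical_cdf_hoeffding[OF n indep distr \<eta> c]
  define Lo where "Lo = {\<omega>\<in>space M. empirical_cdf (\<lambda>i. \<eta> (Xs i \<omega>)) n (y\<^sub>0 + \<epsilon>)
      \<le> measure Q {z. \<eta> z \<le> y\<^sub>0 + \<epsilon>} - c}"
  define Hi where "Hi = {\<omega>\<in>space M. measure Q {z. \<eta> z \<le> y\<^sub>0 - \<epsilon>} + c
      \<le> empirical_cdf (\<lambda>i. \<eta> (Xs i \<omega>)) n (y\<^sub>0 - \<epsilon>)}"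
  have sets: "Lo \<in> sets M" "Hi \<in> sets M"
    using hoeffding(1,2) unfolding Lo_def Hi_def by auto
  have "{\<omega>\<in>space M. \<epsilon> < \<bar>gen_inv (empirical_cdf (\<lambda>i. \<eta> (Xs i \<omega>)) n) \<alpha> - y\<^sub>0\<bar>} \<subseteq> Lo \<union> Hi"
  proof
    fix \<omega> assume "\<omega> \<in> {\<omega>\<in>space M. \<epsilon> < \<bar>gen_inv (empirical_cdf (\<lambda>i. \<eta> (Xs i \<omega>)) n) \<alpha> - y\<^sub>0\<bar>}"
    then have \<omega>: "\<omega> \<in> space M"
      and far: "\<epsilon> < \<bar>gen_inv (empirical_cdf (\<lambda>i. \<eta> (Xs i \<omega>)) n) \<alpha> - y\<^sub>0\<bar>"
      by auto
    from empirical_quantile_far[OF n \<alpha> far] show "\<omega> \<in> Lo \<union> Hi"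
      unfolding Lo_def Hi_def using \<omega> above below by auto
  qed
  moreover have "measure M (Lo \<union> Hi) \<le> measure M Lo + measure M Hi"
    using sets by (intro measure_subadditive) (auto simp: emeasure_finite)
  moreover have "measure M Lo + measure M Hi \<le> 2 * exp (-2 * real n * c\<^sup>2)"
    using hoeffding(3)[of "y\<^sub>0 + \<epsilon>"] hoeffding(4)[of "y\<^sub>0 - \<epsilon>"]
    unfolding Lo_def Hi_def by linarith
  moreover have "Lo \<union> Hi \<in> sets M"
    using sets by blast
  ultimately show ?thesis
    by (meson order_trans)
qed

lemma (in finite_measure) measure_Bex_le_card_mult:
  assumes "finite T"
    and "\<And>\<theta>. \<theta> \<in> T \<Longrightarrow> \<exists>A\<in>sets M. {\<omega>\<in>space M. E \<theta> \<omega>} \<subseteq> A \<and> measure M A \<le> b"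
  shows "measure M {\<omega>\<in>space M. \<exists>\<theta>\<in>T. E \<theta> \<omega>} \<le> real (card T) * b"
proof -
  obtain A where A: "\<And>\<theta>. \<theta> \<in> T \<Longrightarrow> A \<theta> \<in> sets M \<and> {\<omega>\<in>space M. E \<theta> \<omega>} \<subseteq> A \<theta> \<and> measure M (A \<theta>) \<le> b"
    using assms(2) by metis
  have "measure M {\<omega>\<in>space M. \<exists>\<theta>\<in>T. E \<theta> \<omega>} \<le> measure M (\<Union>\<theta>\<in>T. A \<theta>)"
    using A \<open>finite T\<close> by (intro finite_measure_mono) auto
  also have "\<dots> \<le> (\<Sum>\<theta>\<in>T. measure M (A \<theta>))"
    using A \<open>finite T\<close> by (intro measure_UNION_le) auto
  also have "\<dots> \<le> (\<Sum>\<theta>\<in>T. b)"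
    using A by (intro sum_mono) auto
  finally show ?thesis
    by simp
qed

lemma (in prob_space) empirical_quantile_uniform_deviation:
  fixes Xs :: "'c \<Rightarrow> nat \<Rightarrow> 'a \<Rightarrow> 'b::topological_space" and \<eta> :: "'b \<Rightarrow> real"
  assumes n: "n \<ge> 1" and T: "finite T"
    and indep: "\<And>\<theta>. \<theta> \<in> T \<Longrightarrow> indep_vars (\<lambda>_. borel) (Xs \<theta>) {1..n}"
    and distr: "\<And>\<theta> i. \<theta> \<in> T \<Longrightarrow> i \<in> {1..n} \<Longrightarrow> distr M borel (Xs \<theta> i) = Q \<theta>"
    and \<eta>: "\<eta> \<in> borel_measurable borel" and \<alpha>: "0 < \<alpha>" "\<alpha> \<le> 1" and c: "c \<ge> 0"
    and above: "\<And>\<theta>. \<theta> \<in> T \<Longrightarrow> \<alpha> + c \<le> measure (Q \<theta>) {z. \<eta> z \<le> y\<^sub>0 \<theta> + \<epsilon>}"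
    and below: "\<And>\<theta>. \<theta> \<in> T \<Longrightarrow> measure (Q \<theta>) {z. \<eta> z \<le> y\<^sub>0 \<theta> - \<epsilon>} \<le> \<alpha> - c"
  shows "measure M {\<omega>\<in>space M. \<exists>\<theta>\<in>T.
           \<epsilon> < \<bar>gen_inv (empirical_cdf (\<lambda>i. \<eta> (Xs \<theta> i \<omega>)) n) \<alpha> - y\<^sub>0 \<theta>\<bar>}
         \<le> real (card T) * (2 * exp (-2 * real n * c\<^sup>2))"
  using empirical_quantile_deviation[OF n indep distr \<eta> \<alpha> c above below]
  by (intro measure_Bex_le_card_mult T) auto

theorem proposition1:
  fixes \<eta> :: "real^'d \<Rightarrow> real"
    and Pm :: "'d \<Rightarrow> real measure"
    and \<Theta> :: "(real^'p) set"
    and C :: "real^'p \<Rightarrow> real^'d \<Rightarrow> real"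
    and P :: "real^'p \<Rightarrow> (real^'d) measure"
    and G :: "real^'p \<Rightarrow> real \<Rightarrow> real"
    and \<alpha> :: real
    and \<Theta>n :: "nat \<Rightarrow> (real^'p) set"
    and K \<beta> :: real
    and M :: "'a measure"
    and X :: "nat \<Rightarrow> real^'p \<Rightarrow> nat \<Rightarrow> 'a \<Rightarrow> real^'d"
    and \<epsilon> :: real
  assumes eta_meas: "\<eta> \<in> borel_measurable borel"
    and marg_prob: "\<And>j. prob_space (Pm j)"
    and marg_sets: "\<And>j. sets (Pm j) = sets borel"
    and Theta_compact: "compact \<Theta>"
    and copula: "\<And>\<theta>. \<theta> \<in> \<Theta> \<Longrightarrow> is_copula (C \<theta>)"
    and P_prob: "\<And>\<theta>. \<theta> \<in> \<Theta> \<Longrightarrow> prob_space (P \<theta>)"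
    and P_sets: "\<And>\<theta>. \<theta> \<in> \<Theta> \<Longrightarrow> sets (P \<theta>) = sets borel"
    and P_cdf: "\<And>\<theta> x. \<theta> \<in> \<Theta> \<Longrightarrow>
        measure (P \<theta>) {z. \<forall>i. z$i \<le> x$i} = C \<theta> (\<chi> i. cdf_of (Pm i) (x$i))"
    and G_def: "\<And>\<theta> y. \<theta> \<in> \<Theta> \<Longrightarrow> G \<theta> y = measure (P \<theta>) {z. \<eta> z \<le> y}"
    and alpha: "0 < \<alpha>" "\<alpha> < 1"
    and A2: "\<And>\<theta>. \<theta> \<in> \<Theta> \<Longrightarrow> continuous_on UNIV (G \<theta>)"
    and A3_mono: "\<And>\<theta>. \<theta> \<in> \<Theta> \<Longrightarrow> strict_mono (G \<theta>)"
    and A3_unif: "\<exists>e :: real \<Rightarrow> real. (\<forall>\<delta>>0. e \<delta> > 0) \<and>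
        (\<forall>\<theta>\<in>\<Theta>. \<forall>\<delta>>0.
           min (G \<theta> (gen_inv (G \<theta>) \<alpha> + \<delta>) - G \<theta> (gen_inv (G \<theta>) \<alpha>))
               (G \<theta> (gen_inv (G \<theta>) \<alpha>) - G \<theta> (gen_inv (G \<theta>) \<alpha> - \<delta>)) \<ge> e \<delta>)"
    and grid_sub: "\<And>n. n \<ge> 1 \<Longrightarrow> \<Theta>n n \<subseteq> \<Theta>"
    and grid_fin: "\<And>n. n \<ge> 1 \<Longrightarrow> finite (\<Theta>n n)"
    and K_pos: "K > 0" and beta_pos: "\<beta> > 0"
    and grid_card: "\<And>n. n \<ge> 1 \<Longrightarrow> real (card (\<Theta>n n)) \<le> K * real n powr \<beta>"
    and M_prob: "prob_space M"
    and X_indep: "\<And>n \<theta>. n \<ge> 1 \<Longrightarrow> \<theta> \<in> \<Theta>n n \<Longrightarrow>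
        prob_space.indep_vars M (\<lambda>_. borel) (X n \<theta>) {1..n}"
    and X_distr: "\<And>n \<theta> i. n \<ge> 1 \<Longrightarrow> \<theta> \<in> \<Theta>n n \<Longrightarrow> i \<in> {1..n} \<Longrightarrow>
        distr M borel (X n \<theta> i) = P \<theta>"
    and eps_pos: "\<epsilon> > 0"
  shows "(\<lambda>n. measure M {\<omega> \<in> space M. \<exists>\<theta>\<in>\<Theta>n n.
            \<bar>gen_inv (\<lambda>y. (\<Sum>i\<in>{1..n}. if \<eta> (X n \<theta> i \<omega>) \<le> y then 1 else 0) / real n) \<alpha>
             - gen_inv (G \<theta>) \<alpha>\<bar> > \<epsilon>}) \<longlonglongrightarrow> 0"
proof -
  interpret M: prob_space M by (rule M_prob)
  obtain e where e_pos: "\<forall>\<delta>>0. e \<delta> > 0" and e_gap: "\<forall>\<theta>\<in>\<Theta>. \<forall>\<delta>>0.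
      min (G \<theta> (gen_inv (G \<theta>) \<alpha> + \<delta>) - G \<theta> (gen_inv (G \<theta>) \<alpha>))
          (G \<theta> (gen_inv (G \<theta>) \<alpha>) - G \<theta> (gen_inv (G \<theta>) \<alpha> - \<delta>)) \<ge> e \<delta>"
    using A3_unif by blast
  define c where "c = e \<epsilon>"
  have c_pos: "c > 0"
    using e_pos eps_pos by (simp add: c_def)
  have G_eq: "G \<theta> = (\<lambda>y. measure (P \<theta>) {z. \<eta> z \<le> y})" if "\<theta> \<in> \<Theta>" for \<theta>
    using G_def[OF that] by auto
  have G_at_quantile: "G \<theta> (gen_inv (G \<theta>) \<alpha>) = \<alpha>" if "\<theta> \<in> \<Theta>" for \<theta>
    using gen_inv_continuous_distribution[OF P_prob[OF that] P_sets[OF that] eta_meas _ alpha]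
      A2[OF that] G_eq[OF that] by simp
  have gap: "\<alpha> + c \<le> measure (P \<theta>) {z. \<eta> z \<le> gen_inv (G \<theta>) \<alpha> + \<epsilon>}"
    "measure (P \<theta>) {z. \<eta> z \<le> gen_inv (G \<theta>) \<alpha> - \<epsilon>} \<le> \<alpha> - c" if "\<theta> \<in> \<Theta>" for \<theta>
    using e_gap[rule_format, OF that eps_pos] G_at_quantile[OF that] G_def[OF that]
    unfolding c_def min.bounded_iff by simp_all
  have bound: "measure M {\<omega> \<in> space M. \<exists>\<theta>\<in>\<Theta>n n.
      \<bar>gen_inv (\<lambda>y. (\<Sum>i\<in>{1..n}. if \<eta> (X n \<theta> i \<omega>) \<le> y then 1 else 0) / real n) \<alpha>
        - gen_inv (G \<theta>) \<alpha>\<bar> > \<epsilon>} \<le> K * real n powr \<beta> * (2 * exp (-2 * real n * c\<^sup>2))"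
    if n: "n \<ge> 1" for n
  proof -
    have "\<theta> \<in> \<Theta>" if "\<theta> \<in> \<Theta>n n" for \<theta>
      using grid_sub[OF n] that by blast
    then have "measure M {\<omega> \<in> space M. \<exists>\<theta>\<in>\<Theta>n n.
        \<epsilon> < \<bar>gen_inv (empirical_cdf (\<lambda>i. \<eta> (X n \<theta> i \<omega>)) n) \<alpha> - gen_inv (G \<theta>) \<alpha>\<bar>}
        \<le> real (card (\<Theta>n n)) * (2 * exp (-2 * real n * c\<^sup>2))"
      using n alpha c_pos gap
      by (intro M.empirical_quantile_uniform_deviation[OF n grid_fin[OF n] X_indep X_distr eta_meas]) auto
    also have "\<dots> \<le> K * real n powr \<beta> * (2 * exp (-2 * real n * c\<^sup>2))"
      using grid_card[OF n] by (intro mult_right_mono) auto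
    finally show ?thesis
      unfolding empirical_cdf_def .
  qed
  have limit: "(\<lambda>n. K * real n powr \<beta> * (2 * exp (-2 * real n * c\<^sup>2))) \<longlonglongrightarrow> 0"
    using c_pos by real_asymp
  show ?thesis
    by (rule tendsto_sandwich[OF _ eventually_sequentiallyI[OF bound] tendsto_const limit]) simp
qed

end
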